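(* Fix an agent $k$ and coefficients $W_{i,j}\in[-1,1]$, $i,j\in[m_k]$, and suppose there are $\varepsilon'\ge\varepsilon''\ge0$ with $W_{i,i}\ge\max\{W_{i,j}-\varepsilon',-\varepsilon''\}$ for all $i,j$. Let $\hat q^*$ be any optimal solution of $(P^4)$. Then $\hat q^*$ is also an optimal solution of $(P^3)$. Moreover, if $(\hat\lambda^*,\hat\mu^*,\hat\pi^* )$ are Lagrange multipliers satisfying the KKT conditions of $(P^4)$ at $\hat q^*$, then there exists $\lambda^*=(\lambda^*_{i,j})_{i,j}$ such that $(\lambda^*,\mu^*=\hat\mu^*,\pi^*=\hat\pi^* )$ satisfies the KKT conditions of $(P^3)$ at $q^*=\hat q^*$.
   Context: Agent $k$ has finite type support $\{t_k^{(1)},\dots,t_k^{(m_k)}\}$ with probabilities $F_i>0$; $m=\max_{k'}m_{k'}$. With $\gamma>0$ and $\phi(\mathbf{q})=\frac12\gamma\|\mathbf{q}\|_2^2$: program $(P^3)$ maximizes $\sum_iF_i(\sum_jW_{i,j}q_{i,j}-\phi(\mathbf{q}_i))$ subject to $\sum_jq_{i,j}=1$ ($\forall i$), $\sum_iF_iq_{i,j}=F_j$ ($\forall j$), $q_{i,j}\ge0$. Program $(P^4)$ is the same with $W_{i,j}$ replaced by $\hat W_{i,j}=W_{i,j}$ if $W_{i,j}\ge-m(\varepsilon'+2\gamma)-\varepsilon''$ and $\hat W_{i,j}=-m(\varepsilon'+2\gamma)-\varepsilon''$ otherwise. KKT conditions of a program with coefficients $V_{i,j}$ (either $W$ or $\hat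 W$) at solution $q$ with multipliers $(\lambda,\mu,\pi)$: (1) $F_i(V_{i,j}-\partial\phi(\mathbf{q}_i)/\partial q_{i,j})=\lambda_{i,j}+\mu_i+F_i\pi_j$; (2) $\lambda_{i,j}\le0$; (3) $\lambda_{i,j}q_{i,j}=0$, for all $i,j$. *)

theory Defs
  imports Complex_Main
begin

text \<open>Types of agent k are indexed by 0..<n (n = m_k). Matrices are nat => nat => real,
  only entries with indices < n matter.\<close>

definition phi :: "real \<Rightarrow> nat \<Rightarrow> (nat \<Rightarrow> real) \<Rightarrow> real" where
  "phi \<gamma> n qi = \<gamma> / 2 * (\<Sum>j<n. (qi j)^2)"

definition feasible :: "nat \<Rightarrow> (nat \<Rightarrow> real) \<Rightarrow> (nat \<Rightarrow> nat \<Rightarrow> real) \<Rightarrow> bool" where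
  "feasible n F q \<longleftrightarrow>
     (\<forall>i<n. (\<Sum>j<n. q i j) = 1) \<and>
     (\<forall>j<n. (\<Sum>i<n. F i * q i j) = F j) \<and>
     (\<forall>i<n. \<forall>j<n. q i j \<ge> 0)"

definition objective :: "nat \<Rightarrow> real \<Rightarrow> (nat \<Rightarrow> real) \<Rightarrow> (nat \<Rightarrow> nat \<Rightarrow> real)
    \<Rightarrow> (nat \<Rightarrow> nat \<Rightarrow> real) \<Rightarrow> real" where
  "objective n \<gamma> F V q = (\<Sum>i<n. F i * ((\<Sum>j<n. V i j * q i j) - phi \<gamma> n (q i)))"

definition optimal :: "nat \<Rightarrow> real \<Rightarrow> (nat \<Rightarrow> real) \<Rightarrow> (nat \<Rightarrow> nat \<Rightarrow> real)
    \<Rightarrow> (nat \<Rightarrow> nat \<Rightarrow> real) \<Rightarrow> bool" where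
  "optimal n \<gamma> F V q \<longleftrightarrow> feasible n F q \<and>
     (\<forall>q'. feasible n F q' \<longrightarrow> objective n \<gamma> F V q' \<le> objective n \<gamma> F V q)"

text \<open>Truncated coefficients \<hat>W of (P^4); m is the global max number of types.\<close>
definition Wtrunc :: "nat \<Rightarrow> real \<Rightarrow> real \<Rightarrow> real \<Rightarrow> (nat \<Rightarrow> nat \<Rightarrow> real) \<Rightarrow> nat \<Rightarrow> nat \<Rightarrow> real" where
  "Wtrunc m \<gamma> e1 e2 W i j =
     (if W i j \<ge> - real m * (e1 + 2*\<gamma>) - e2 then W i j else - real m * (e1 + 2*\<gamma>) - e2)"

text \<open>KKT conditions; the partial derivative of phi(q_i) w.r.t. q_{i,j} is gamma * q_{i,j}.\<close>
definition KKT :: "nat \<Rightarrow> real \<Rightarrow> (nat \<Rightarrow> real) \<Rightarrow> (nat \<Rightarrow> nat \<Rightarrow> real) \<Rightarrow> (nat \<Rightarrow> nat \<Rightarrow> real)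
    \<Rightarrow> (nat \<Rightarrow> nat \<Rightarrow> real) \<Rightarrow> (nat \<Rightarrow> real) \<Rightarrow> (nat \<Rightarrow> real) \<Rightarrow> bool" where
  "KKT n \<gamma> F V q lam mu piv \<longleftrightarrow>
     (\<forall>i<n. \<forall>j<n.
        F i * (V i j - \<gamma> * q i j) = lam i j + mu i + F i * piv j \<and>
        lam i j \<le> 0 \<and> lam i j * q i j = 0)"

end

(*
  The truncated coefficients dominate, Wtrunc >= W, so everything follows once qhat puts no
  mass on an entry where the two differ: then both objectives agree at qhat, and the multipliers
  of (P^4) carry over with lam = lamh - F (Wtrunc - W).

  Suppose qhat(a,b) > 0 at a truncated entry. Flow conservation (rows sum to 1, F-weighted
  columns to F) yields a path from b back to a in the support of qhat; taking it simple puts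
  (a,b) on a cycle of length at most n. Shifting mass from every arc of the cycle to the diagonal
  entry of its tail is a feasible direction, so by optimality its first-order gain is
  nonpositive. But the truncated arc gains at least m (e1 + 2 gamma) - gamma, while each of the at
  most n - 1 <= m - 1 other arcs loses at most e1 + gamma.
*)

theory Submission
  imports Defs "HOL-Library.Transitive_Closure_Table"
begin

lemma feasible_le_one:
  assumes "feasible n F q" "i < n" "j < n"
  shows "q i j \<le> 1"
proof -
  have "q i j \<le> (\<Sum>j'<n. q i j')"
    using assms unfolding feasible_def by (intro member_le_sum) auto
  then show ?thesis
    using assms unfolding feasible_def by simp
qed

lemma objective_add_direction:
  "objective n \<gamma> F V (\<lambda>a b. q a b + t * D a b) =
     objective n \<gamma> F V q + t * (\<Sum>a<n. F a * (\<Sum>b<n. (V a b - \<gamma> * q a b) * D a b))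
       - t\<^sup>2 * (\<gamma> / 2 * (\<Sum>a<n. F a * (\<Sum>b<n. (D a b)\<^sup>2)))"
proof -
  have row: "F a * ((\<Sum>b<n. V a b * (q a b + t * D a b)) - \<gamma> / 2 * (\<Sum>b<n. (q a b + t * D a b)\<^sup>2))
      = F a * ((\<Sum>b<n. V a b * q a b) - \<gamma> / 2 * (\<Sum>b<n. (q a b)\<^sup>2))
        + t * (F a * (\<Sum>b<n. (V a b - \<gamma> * q a b) * D a b))
        - t\<^sup>2 * (\<gamma> / 2 * (F a * (\<Sum>b<n. (D a b)\<^sup>2)))" for a
    by (simp add: power2_sum algebra_simps sum.distrib sum_subtractf sum_distrib_left)
  show ?thesis
    unfolding objective_def phi_def row
    by (simp add: sum.distrib sum_subtractf sum_distrib_left)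
qed

lemma feasible_add_direction:
  assumes feas: "feasible n F q"
    and rows: "\<forall>a<n. (\<Sum>b<n. D a b) = 0"
    and cols: "\<forall>b<n. (\<Sum>a<n. F a * D a b) = 0"
    and support: "\<forall>a<n. \<forall>b<n. D a b < 0 \<longrightarrow> q a b > 0"
  obtains t0 where "t0 > 0"
    and "\<And>t. 0 \<le> t \<Longrightarrow> t \<le> t0 \<Longrightarrow> feasible n F (\<lambda>a b. q a b + t * D a b)"
proof
  define ratio where "ratio = (\<lambda>(a, b). if D a b < 0 then q a b / - D a b else 1)"
  define t0 where "t0 = Min (insert 1 (ratio ` ({..<n} \<times> {..<n})))"
  show "t0 > 0"
    unfolding t0_def using support by (auto simp: ratio_def Min_gr_iff intro: divide_pos_neg)
  fix t :: real
  assume t: "0 \<le> t" "t \<le> t0"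
  show "feasible n F (\<lambda>a b. q a b + t * D a b)"
    unfolding feasible_def
  proof (intro conjI allI impI)
    fix i assume "i < n"
    then show "(\<Sum>j<n. q i j + t * D i j) = 1"
      using feas rows by (simp add: feasible_def sum.distrib flip: sum_distrib_left)
  next
    fix j assume "j < n"
    then show "(\<Sum>i<n. F i * (q i j + t * D i j)) = F j"
      using feas cols
      by (simp add: feasible_def distrib_left sum.distrib mult.left_commute[of _ t]
          flip: sum_distrib_left)
  next
    fix i j assume ij: "i < n" "j < n"
    show "q i j + t * D i j \<ge> 0"
    proof (cases "D i j < 0")
      case True
      have "t \<le> ratio (i, j)"
        using t ij unfolding t0_def by (auto intro: order_trans[OF _ Min_le])
      then have "t \<le> q i j / - D i j"
        using True by (simp add: ratio_def)
      then have "t * - D i j \<le> q i j"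
        using True by (metis neg_0_less_iff_less pos_le_divide_eq)
      then show ?thesis by simp
    next
      case False
      then show ?thesis using feas ij t unfolding feasible_def by simp
    qed
  qed
qed

lemma optimal_directional_derivative_nonpos:
  assumes opt: "optimal n \<gamma> F V q"
    and rows: "\<forall>a<n. (\<Sum>b<n. D a b) = 0"
    and cols: "\<forall>b<n. (\<Sum>a<n. F a * D a b) = 0"
    and support: "\<forall>a<n. \<forall>b<n. D a b < 0 \<longrightarrow> q a b > 0"
  shows "(\<Sum>a<n. F a * (\<Sum>b<n. (V a b - \<gamma> * q a b) * D a b)) \<le> 0"
proof (rule ccontr)
  define A where "A = (\<Sum>a<n. F a * (\<Sum>b<n. (V a b - \<gamma> * q a b) * D a b))"
  define B where "B = \<gamma> / 2 * (\<Sum>a<n. F a * (\<Sum>b<n. (D a b)\<^sup>2))"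
  assume "\<not> ?thesis"
  then have A_pos: "A > 0" unfolding A_def by simp
  have "feasible n F q"
    using opt unfolding optimal_def by simp
  then obtain t0 where "t0 > 0"
    and feasible_t: "\<And>t. 0 \<le> t \<Longrightarrow> t \<le> t0 \<Longrightarrow> feasible n F (\<lambda>a b. q a b + t * D a b)"
    using feasible_add_direction[OF _ rows cols support] by blast
  define t where "t = min t0 (A / (2 * (\<bar>B\<bar> + 1)))"
  have t_pos: "t > 0" unfolding t_def using \<open>t0 > 0\<close> A_pos by simp
  have "t * B \<le> t * \<bar>B\<bar>"
    using t_pos by (simp add: mult_left_mono)
  also have "\<dots> \<le> A / (2 * (\<bar>B\<bar> + 1)) * \<bar>B\<bar>"
    by (intro mult_right_mono) (auto simp: t_def)
  also have "\<dots> \<le> A / 2"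
    using A_pos by (simp add: field_simps)
  finally have "t * B \<le> A / 2" .
  then have "t * (t * B) \<le> t * (A / 2)"
    using t_pos by (intro mult_left_mono) auto
  then have "t * A - t\<^sup>2 * B \<ge> t * (A / 2)"
    by (simp add: power2_eq_square algebra_simps)
  moreover have "t * (A / 2) > 0"
    using t_pos A_pos by simp
  moreover have "objective n \<gamma> F V (\<lambda>a b. q a b + t * D a b) \<le> objective n \<gamma> F V q"
    using opt feasible_t[of t] t_pos unfolding optimal_def by (simp add: t_def)
  ultimately show False
    unfolding objective_add_direction A_def B_def by simp
qed

(* One unit of mass moves from each arc (p k, p (k + 1)) of the closed walk onto the diagonal
   entry (p k, p k). *)
definition cycle_shift :: "(nat \<Rightarrow> nat) \<Rightarrow> nat \<Rightarrow> nat \<Rightarrow> nat \<Rightarrow> real" where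
  "cycle_shift p L a b =
     (\<Sum>k<L. if a = p k then of_bool (b = a) - of_bool (b = p (Suc k)) else 0)"

lemma cycle_shift_row_sum:
  assumes "\<forall>k<L. p (Suc k) < n" "a < n"
  shows "(\<Sum>b<n. cycle_shift p L a b) = 0"
  unfolding cycle_shift_def
proof (subst sum.swap, rule sum.neutral, rule ballI)
  fix k assume "k \<in> {..<L}"
  then have "p (Suc k) < n"
    using assms(1) by simp
  then show "(\<Sum>b<n. if a = p k then of_bool (b = a) - of_bool (b = p (Suc k)) else 0 :: real) = 0"
    using assms(2) by (cases "a = p k") (simp_all add: sum_subtractf)
qed

lemma cycle_shift_column_sum:
  assumes "\<forall>k<L. p k < n" "p L = p 0"
  shows "(\<Sum>a<n. cycle_shift p L a b) = 0"
proof -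
  have "(\<Sum>a<n. cycle_shift p L a b) = (\<Sum>k<L. of_bool (b = p k) - of_bool (b = p (Suc k)))"
    unfolding cycle_shift_def by (subst sum.swap) (auto intro!: sum.cong simp: assms)
  also have "\<dots> = 0"
    using assms(2) sum_lessThan_telescope'[of "\<lambda>k. of_bool (b = p k) :: real"] by simp
  finally show ?thesis .
qed

lemma cycle_shift_negD:
  assumes "cycle_shift p L a b < 0"
  obtains k where "k < L" "a = p k" "b = p (Suc k)"
proof -
  have "\<exists>k\<in>{..<L}. (if a = p k then of_bool (b = a) - of_bool (b = p (Suc k)) else 0 :: real) < 0"
  proof (rule ccontr)
    assume "\<not> ?thesis"
    then have "cycle_shift p L a b \<ge> 0"
      unfolding cycle_shift_def by (intro sum_nonneg) (simp add: not_less)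
    with assms show False by simp
  qed
  then obtain k where "k < L"
    and negative: "(if a = p k then of_bool (b = a) - of_bool (b = p (Suc k)) else 0 :: real) < 0"
    by blast
  have "a = p k"
    using negative by (metis less_irrefl)
  moreover have "b = p (Suc k)"
    using negative by (cases "b = p (Suc k)") (auto simp: of_bool_def split: if_splits)
  ultimately show thesis
    using \<open>k < L\<close> that by blast
qed

lemma cycle_shift_pairing:
  assumes "\<forall>k<L. p k < n \<and> p (Suc k) < n"
  shows "(\<Sum>a<n. \<Sum>b<n. c a b * cycle_shift p L a b)
    = (\<Sum>k<L. c (p k) (p k) - c (p k) (p (Suc k)))"
proof -
  have "(\<Sum>a<n. \<Sum>b<n. c a b * cycle_shift p L a b)
      = (\<Sum>k<L. \<Sum>a<n. if a = p k then (\<Sum>b<n. c a b * (of_bool (b = a) - of_bool (b = p (Suc k)))) else 0)"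
    unfolding cycle_shift_def sum_distrib_left
    by (subst sum.swap, subst sum.swap) (auto intro!: sum.cong)
  also have "\<dots> = (\<Sum>k<L. c (p k) (p k) - c (p k) (p (Suc k)))"
    using assms by (intro sum.cong refl) (simp add: right_diff_distrib sum_subtractf)
  finally show ?thesis .
qed

definition support_edge :: "nat \<Rightarrow> (nat \<Rightarrow> nat \<Rightarrow> real) \<Rightarrow> nat \<Rightarrow> nat \<Rightarrow> bool" where
  "support_edge n q a b \<longleftrightarrow> a < n \<and> b < n \<and> q a b > 0"

lemma optimal_cycle_gain_nonpos:
  assumes opt: "optimal n \<gamma> F V q" and F_pos: "\<forall>i<n. F i > 0"
    and cycle: "\<forall>k<L. support_edge n q (p k) (p (Suc k))" "p L = p 0"
  shows "(\<Sum>k<L. (V (p k) (p k) - \<gamma> * q (p k) (p k))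
                 - (V (p k) (p (Suc k)) - \<gamma> * q (p k) (p (Suc k)))) \<le> 0"
proof -
  define D where "D a b = cycle_shift p L a b / F a" for a b
  have on_cycle: "\<forall>k<L. p k < n \<and> p (Suc k) < n"
    using cycle(1) unfolding support_edge_def by blast
  have rows: "\<forall>a<n. (\<Sum>b<n. D a b) = 0"
    using on_cycle by (simp add: D_def cycle_shift_row_sum flip: sum_divide_distrib)
  have "(\<Sum>a<n. F a * D a b) = (\<Sum>a<n. cycle_shift p L a b)" for b
    using F_pos by (intro sum.cong) (auto simp: D_def)
  then have cols: "\<forall>b<n. (\<Sum>a<n. F a * D a b) = 0"
    using on_cycle cycle(2) by (simp add: cycle_shift_column_sum)
  have support: "\<forall>a<n. \<forall>b<n. D a b < 0 \<longrightarrow> q a b > 0"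
  proof (intro allI impI)
    fix a b assume "a < n" "b < n" "D a b < 0"
    moreover have "F a > 0"
      using F_pos \<open>a < n\<close> by simp
    ultimately have "cycle_shift p L a b < 0"
      by (simp add: D_def divide_less_0_iff)
    then obtain k where "k < L" "a = p k" "b = p (Suc k)"
      by (rule cycle_shift_negD)
    then show "q a b > 0"
      using cycle(1) unfolding support_edge_def by blast
  qed
  have "(\<Sum>a<n. F a * (\<Sum>b<n. (V a b - \<gamma> * q a b) * D a b)) \<le> 0"
    using optimal_directional_derivative_nonpos[OF opt rows cols support] .
  also have "(\<Sum>a<n. F a * (\<Sum>b<n. (V a b - \<gamma> * q a b) * D a b))
      = (\<Sum>a<n. \<Sum>b<n. (V a b - \<gamma> * q a b) * cycle_shift p L a b)"
    using F_pos by (intro sum.cong) (auto simp: D_def sum_distrib_left)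
  finally show ?thesis
    using on_cycle by (simp add: cycle_shift_pairing)
qed

lemma feasible_flow_out_eq_flow_in:
  assumes feas: "feasible n F q" and R: "R \<subseteq> {..<n}"
  shows "(\<Sum>a\<in>R. \<Sum>b\<in>{..<n}-R. F a * q a b) = (\<Sum>b\<in>R. \<Sum>a\<in>{..<n}-R. F a * q a b)"
proof -
  have split_range: "(\<Sum>i<n. f i) = (\<Sum>i\<in>R. f i) + (\<Sum>i\<in>{..<n}-R. f i)" for f :: "nat \<Rightarrow> real"
    using R by (metis add.commute finite_lessThan sum.subset_diff)
  have row_mass: "(\<Sum>b<n. F a * q a b) = F a" if "a \<in> R" for a
  proof -
    have "a < n" using R that by auto
    then show ?thesis using feas unfolding feasible_def by (simp flip: sum_distrib_left)
  qed
  have column_mass: "(\<Sum>a<n. F a * q a b) = F b" if "b \<in> R" for b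
  proof -
    have "b < n" using R that by auto
    then show ?thesis using feas unfolding feasible_def by simp
  qed
  have "(\<Sum>a\<in>R. \<Sum>b\<in>R. F a * q a b) + (\<Sum>a\<in>R. \<Sum>b\<in>{..<n}-R. F a * q a b)
      = (\<Sum>a\<in>R. \<Sum>b<n. F a * q a b)"
    unfolding split_range sum.distrib ..
  also have "\<dots> = (\<Sum>a\<in>R. F a)"
    using row_mass by (rule sum.cong[OF refl])
  also have "\<dots> = (\<Sum>b\<in>R. \<Sum>a<n. F a * q a b)"
    using column_mass by (rule sum.cong[OF refl, symmetric])
  also have "\<dots> = (\<Sum>b\<in>R. \<Sum>a\<in>R. F a * q a b) + (\<Sum>b\<in>R. \<Sum>a\<in>{..<n}-R. F a * q a b)"
    unfolding split_range sum.distrib ..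
  finally show ?thesis
    using sum.swap[of "\<lambda>a b. F a * q a b" R R] by simp
qed

lemma support_edge_reverse_reachable:
  assumes feas: "feasible n F q" and F_pos: "\<forall>i<n. F i > 0"
    and edge: "support_edge n q a b"
  shows "(support_edge n q)\<^sup>*\<^sup>* b a"
proof (rule ccontr)
  assume unreachable: "\<not> ?thesis"
  define R where "R = {v. v < n \<and> (support_edge n q)\<^sup>*\<^sup>* b v}"
  define flow where "flow a' b' = F a' * q a' b'" for a' b'
  have R_sub: "R \<subseteq> {..<n}" unfolding R_def by auto
  have flow_nonneg: "flow a' b' \<ge> 0" if "a' < n" "b' < n" for a' b'
    using feas F_pos that unfolding feasible_def flow_def by (simp add: less_imp_le)
  have "(\<Sum>a'\<in>R. \<Sum>b'\<in>{..<n}-R. flow a' b') = 0"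
  proof (intro sum.neutral ballI)
    fix a' b' assume a': "a' \<in> R" and b': "b' \<in> {..<n} - R"
    then have "\<not> q a' b' > 0"
      unfolding R_def support_edge_def by (auto intro: rtranclp.rtrancl_into_rtrancl)
    moreover have "q a' b' \<ge> 0"
      using feas a' b' R_sub unfolding feasible_def by auto
    ultimately show "flow a' b' = 0"
      unfolding flow_def by simp
  qed
  moreover have "flow a b \<le> (\<Sum>b'\<in>R. \<Sum>a'\<in>{..<n}-R. flow a' b')"
  proof -
    have a_out: "a \<in> {..<n} - R" and b_in: "b \<in> R"
      using edge unreachable unfolding R_def support_edge_def by auto
    have "flow a b \<le> (\<Sum>a'\<in>{..<n}-R. flow a' b)"
      using a_out b_in R_sub flow_nonneg by (intro member_le_sum) auto
    also have "\<dots> \<le> (\<Sum>b'\<in>R. \<Sum>a'\<in>{..<n}-R. flow a' b')"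
      using b_in R_sub flow_nonneg
      by (intro member_le_sum[of b R "\<lambda>b'. \<Sum>a'\<in>{..<n}-R. flow a' b'"] sum_nonneg)
        (auto intro: finite_subset)
    finally show ?thesis .
  qed
  moreover have "flow a b > 0"
    using edge F_pos unfolding support_edge_def flow_def by simp
  ultimately show False
    using feasible_flow_out_eq_flow_in[OF feas R_sub] unfolding flow_def by simp
qed

lemma support_edge_on_short_cycle:
  assumes feas: "feasible n F q" and F_pos: "\<forall>i<n. F i > 0"
    and edge: "support_edge n q a b"
  obtains p L where "p 0 = a" "p (Suc 0) = b" "p L = a" "0 < L" "L \<le> n"
    "\<forall>k<L. support_edge n q (p k) (p (Suc k))"
proof -
  obtain xs where "rtrancl_path (support_edge n q) b xs a"
    using support_edge_reverse_reachable[OF assms] rtranclp_eq_rtrancl_path by metis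
  then obtain ys where path: "rtrancl_path (support_edge n q) b ys a"
    and distinct: "distinct (b # ys)"
    by (rule rtrancl_path_distinct)
  have "set (b # ys) \<subseteq> {..<n}"
    using edge rtrancl_path_Range[OF path] unfolding support_edge_def by auto
  then have "card (set (b # ys)) \<le> card {..<n}"
    by (intro card_mono) auto
  then have "length (b # ys) \<le> n"
    by (simp only: distinct_card[OF distinct] card_lessThan)
  moreover have cycle: "rtrancl_path (support_edge n q) a (b # ys) a"
    using edge path by (rule rtrancl_path.step)
  moreover have "(a # b # ys) ! length (b # ys) = a"
    using rtrancl_path_last[OF cycle] by (cases ys rule: rev_cases) (auto simp: nth_append)
  ultimately show thesis
    using rtrancl_path_nth[OF cycle]
    by (intro that[of "\<lambda>k. (a # b # ys) ! k" "length (b # ys)"]) simp_all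
qed

lemma Wtrunc_eq_max:
  "Wtrunc m \<gamma> e1 e2 W i j = max (W i j) (- real m * (e1 + 2 * \<gamma>) - e2)"
  unfolding Wtrunc_def by simp

lemma Wtrunc_arc_gain:
  fixes m :: nat
  assumes \<gamma>: "\<gamma> \<ge> 0" and e: "e1 \<ge> e2" "e2 \<ge> 0"
    and diag: "W i i \<ge> max (W i j - e1) (- e2)"
    and feas: "feasible n F q" and ij: "i < n" "j < n"
  defines "gain \<equiv> (Wtrunc m \<gamma> e1 e2 W i i - \<gamma> * q i i) - (Wtrunc m \<gamma> e1 e2 W i j - \<gamma> * q i j)"
  shows "gain \<ge> - (e1 + \<gamma>)"
    and "Wtrunc m \<gamma> e1 e2 W i j \<noteq> W i j \<Longrightarrow> gain \<ge> real m * (e1 + 2 * \<gamma>) - \<gamma>"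
proof -
  have "q i i \<le> 1" "q i j \<ge> 0"
    using feasible_le_one[OF feas ij(1,1)] feas ij unfolding feasible_def by auto
  then have mass: "\<gamma> * q i i \<le> \<gamma>" "\<gamma> * q i j \<ge> 0"
    using \<gamma> by (simp_all add: mult_left_le)
  have "real m * (e1 + 2 * \<gamma>) \<ge> 0"
    using \<gamma> e by simp
  then have diag_kept: "Wtrunc m \<gamma> e1 e2 W i i = W i i"
    and off_diag: "Wtrunc m \<gamma> e1 e2 W i j \<le> W i i + e1"
    using diag e unfolding Wtrunc_eq_max by auto
  show "gain \<ge> - (e1 + \<gamma>)"
    using diag_kept off_diag mass unfolding gain_def by linarith
  assume "Wtrunc m \<gamma> e1 e2 W i j \<noteq> W i j"
  then have "Wtrunc m \<gamma> e1 e2 W i j = - real m * (e1 + 2 * \<gamma>) - e2"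
    unfolding Wtrunc_eq_max by (auto simp: max_def split: if_split_asm)
  then show "gain \<ge> real m * (e1 + 2 * \<gamma>) - \<gamma>"
    using diag_kept diag mass unfolding gain_def by simp
qed

lemma Wtrunc_eq_on_support:
  assumes "n \<le> m" and \<gamma>: "\<gamma> > 0" and F_pos: "\<forall>i<n. F i > 0" and e: "e1 \<ge> e2" "e2 \<ge> 0"
    and diag: "\<forall>i<n. \<forall>j<n. W i i \<ge> max (W i j - e1) (- e2)"
    and opt: "optimal n \<gamma> F (Wtrunc m \<gamma> e1 e2 W) q"
    and edge: "support_edge n q a b"
  shows "Wtrunc m \<gamma> e1 e2 W a b = W a b"
proof (rule ccontr)
  assume truncated: "Wtrunc m \<gamma> e1 e2 W a b \<noteq> W a b"
  have feas: "feasible n F q"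
    using opt unfolding optimal_def by simp
  obtain p L where p: "p 0 = a" "p (Suc 0) = b" "p L = a" "0 < L" "L \<le> n"
    and arcs: "\<forall>k<L. support_edge n q (p k) (p (Suc k))"
    using support_edge_on_short_cycle[OF feas F_pos edge] by blast
  obtain l where L: "L = Suc l"
    using \<open>0 < L\<close> gr0_implies_Suc by blast
  define gain where "gain k = (Wtrunc m \<gamma> e1 e2 W (p k) (p k) - \<gamma> * q (p k) (p k))
    - (Wtrunc m \<gamma> e1 e2 W (p k) (p (Suc k)) - \<gamma> * q (p k) (p (Suc k)))" for k
  have arc_bound: "W (p k) (p k) \<ge> max (W (p k) (p (Suc k)) - e1) (- e2)"
    "p k < n" "p (Suc k) < n" if "k < L" for k
    using that arcs diag unfolding support_edge_def by auto
  have arc_gain: "gain k \<ge> - (e1 + \<gamma>)" if "k < L" for k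
    using Wtrunc_arc_gain(1)[where i = "p k" and j = "p (Suc k)" and W = W and m = m,
      OF less_imp_le[OF \<gamma>] e arc_bound(1)[OF that] feas arc_bound(2,3)[OF that]]
    unfolding gain_def .
  have "(\<Sum>k<l. gain (Suc k)) \<ge> (\<Sum>k<l. - (e1 + \<gamma>))"
    by (intro sum_mono arc_gain) (simp add: L)
  then have other_arcs: "(\<Sum>k<l. gain (Suc k)) \<ge> - (real l * (e1 + \<gamma>))"
    by (simp add: algebra_simps)
  have first_arc: "gain 0 \<ge> real m * (e1 + 2 * \<gamma>) - \<gamma>"
    using Wtrunc_arc_gain(2)[where i = "p 0" and j = "p (Suc 0)" and W = W and m = m,
      OF less_imp_le[OF \<gamma>] e arc_bound(1)[OF \<open>0 < L\<close>] feas
      arc_bound(2,3)[OF \<open>0 < L\<close>]] truncated p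
    unfolding gain_def by simp
  have "real l * (e1 + \<gamma>) \<le> (real m - 1) * (e1 + \<gamma>)"
    using \<open>L \<le> n\<close> \<open>n \<le> m\<close> \<gamma> e unfolding L by (intro mult_right_mono) linarith+
  moreover have "real m * (e1 + 2 * \<gamma>) - \<gamma> - (real m - 1) * (e1 + \<gamma>) = e1 + real m * \<gamma>"
    by (simp add: algebra_simps)
  moreover have "real m * \<gamma> > 0"
    using \<open>0 < L\<close> \<open>L \<le> n\<close> \<open>n \<le> m\<close> \<gamma> by simp
  moreover have "(\<Sum>k<L. gain k) = gain 0 + (\<Sum>k<l. gain (Suc k))"
    unfolding L by (rule sum.lessThan_Suc_shift)
  moreover have "(\<Sum>k<L. gain k) \<le> 0"
    using optimal_cycle_gain_nonpos[OF opt F_pos arcs] p unfolding gain_def by simp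
  ultimately show False
    using other_arcs first_arc e by linarith
qed

lemma optimal_if_le_and_agree_on_support:
  assumes opt: "optimal n \<gamma> F V q" and F_nonneg: "\<forall>i<n. F i \<ge> 0"
    and le: "\<forall>i<n. \<forall>j<n. W i j \<le> V i j"
    and agree: "\<forall>i<n. \<forall>j<n. (V i j - W i j) * q i j = 0"
  shows "optimal n \<gamma> F W q"
proof -
  have "objective n \<gamma> F W q' \<le> objective n \<gamma> F V q'" if "feasible n F q'" for q'
    unfolding objective_def using that F_nonneg le
    by (intro sum_mono mult_left_mono diff_right_mono) (auto simp: feasible_def intro!: mult_right_mono)
  moreover have "objective n \<gamma> F W q = objective n \<gamma> F V q"
  proof -
    have "(\<Sum>j<n. W i j * q i j) = (\<Sum>j<n. V i j * q i j)" if "i < n" for i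
    proof (rule sum.cong[OF refl])
      fix j assume "j \<in> {..<n}"
      then have "(V i j - W i j) * q i j = 0"
        using agree that by simp
      then show "W i j * q i j = V i j * q i j"
        by (auto simp: algebra_simps)
    qed
    then show ?thesis
      unfolding objective_def by simp
  qed
  ultimately show ?thesis
    using opt unfolding optimal_def by (metis order.trans)
qed

lemma KKT_if_le_and_agree_on_support:
  assumes kkt: "KKT n \<gamma> F V q lam mu piv" and F_nonneg: "\<forall>i<n. F i \<ge> 0"
    and le: "\<forall>i<n. \<forall>j<n. W i j \<le> V i j"
    and agree: "\<forall>i<n. \<forall>j<n. (V i j - W i j) * q i j = 0"
  shows "KKT n \<gamma> F W q (\<lambda>i j. lam i j - F i * (V i j - W i j)) mu piv"
  unfolding KKT_def
proof (intro allI impI conjI)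
  fix i j assume ij: "i < n" "j < n"
  then have stationary: "F i * (V i j - \<gamma> * q i j) = lam i j + mu i + F i * piv j"
    and "lam i j \<le> 0" and "lam i j * q i j = 0"
    using kkt unfolding KKT_def by auto
  have "F i * (V i j - W i j) \<ge> 0" and "(V i j - W i j) * q i j = 0"
    using ij F_nonneg le agree by auto
  have "F i * (W i j - \<gamma> * q i j) = F i * (V i j - \<gamma> * q i j) - F i * (V i j - W i j)"
    by (simp add: algebra_simps)
  then show "F i * (W i j - \<gamma> * q i j) = lam i j - F i * (V i j - W i j) + mu i + F i * piv j"
    using stationary by linarith
  show "lam i j - F i * (V i j - W i j) \<le> 0"
    using \<open>lam i j \<le> 0\<close> \<open>F i * (V i j - W i j) \<ge> 0\<close> by linarith
  have "(lam i j - F i * (V i j - W i j)) * q i j = lam i j * q i j - F i * ((V i j - W i j) * q i j)"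
    by (simp add: algebra_simps)
  then show "(lam i j - F i * (V i j - W i j)) * q i j = 0"
    using \<open>lam i j * q i j = 0\<close> \<open>(V i j - W i j) * q i j = 0\<close> by simp
qed

theorem mainTheorem12:
  fixes n m :: nat and \<gamma> e1 e2 :: real and F :: "nat \<Rightarrow> real"
    and W qhat :: "nat \<Rightarrow> nat \<Rightarrow> real"
  assumes "n \<le> m"
    and "\<gamma> > 0"
    and "\<forall>i<n. F i > 0" and "(\<Sum>i<n. F i) = 1"
    and "\<forall>i<n. \<forall>j<n. -1 \<le> W i j \<and> W i j \<le> 1"
    and "e1 \<ge> e2" and "e2 \<ge> 0"
    and "\<forall>i<n. \<forall>j<n. W i i \<ge> max (W i j - e1) (- e2)"
    and "optimal n \<gamma> F (Wtrunc m \<gamma> e1 e2 W) qhat"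
  shows "optimal n \<gamma> F W qhat \<and>
    (\<forall>lamh muh pih. KKT n \<gamma> F (Wtrunc m \<gamma> e1 e2 W) qhat lamh muh pih \<longrightarrow>
        (\<exists>lam. KKT n \<gamma> F W qhat lam muh pih))"
proof -
  let ?Wh = "Wtrunc m \<gamma> e1 e2 W"
  have F_nonneg: "\<forall>i<n. F i \<ge> 0"
    using assms(3) by (simp add: less_imp_le)
  have le: "\<forall>i<n. \<forall>j<n. W i j \<le> ?Wh i j"
    by (simp add: Wtrunc_eq_max)
  have agree: "\<forall>i<n. \<forall>j<n. (?Wh i j - W i j) * qhat i j = 0"
  proof (intro allI impI)
    fix i j assume "i < n" "j < n"
    then show "(?Wh i j - W i j) * qhat i j = 0"
      using Wtrunc_eq_on_support[OF assms(1-3,6-9), of i j] assms(9)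
      unfolding support_edge_def optimal_def feasible_def by force
  qed
  show ?thesis
    using optimal_if_le_and_agree_on_support[OF assms(9) F_nonneg le agree]
      KKT_if_le_and_agree_on_support[OF _ F_nonneg le agree] by blast
qed

end
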